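(* Consider a POMDP with finite state space $\mathcal S$, finite action space $\mathcal A$, finite observation space $\mathcal Y$, initial state $S_1\sim\rho$ and dynamics $\Pr(S_{t+1},Y_{t+1}\mid S_{1:t},Y_{1:t},A_{1:t})=P(S_{t+1},Y_{t+1}\mid S_t,A_t)$. Let $Z_t\in\mathcal Z$ be an agent state generated recursively by $Z_{t+1}=\phi(Z_t,Y_{t+1},A_t)$ from a fixed initial value, and let actions be chosen by an arbitrary agent-state based behavior policy $\mu=(\mu_1,\mu_2,\dots)$, i.e. $A_t\sim\mu_t(\cdot\mid Z_t)$. Then the process $\{(S_t,Z_t)\}_{t\ge1}$ is a Markov chain, and consequently the processes $\{(S_t,Z_t,A_t)\}_{t\ge1}$ and $\{(S_t,Y_t,Z_t,A_t)\}_{t\ge1}$ are also Markov chains.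
   Context: Markov chains here are allowed to be time-inhomogeneous. *)

theory Defs
  imports "HOL-Probability.Probability"
begin

text \<open>Trajectory entries are tuples (S_t, Y_t, Z_t, A_t).  pomdp_traj ... n is the
  law of the first n+1 entries (times 1..n+1, stored at list positions 0..n).
  rho0 is the joint law of (S_1, Y_1) (its first marginal is rho),
  P s a is the law of (S_{t+1}, Y_{t+1}) given S_t = s, A_t = a,
  phi is the agent-state update Z_{t+1} = phi Z_t Y_{t+1} A_t, z0 = Z_1,
  mu t z is the behaviour policy at time t (t >= 1).\<close>

fun pomdp_traj ::
  "('s \<times> 'y) pmf \<Rightarrow> ('s \<Rightarrow> 'a \<Rightarrow> ('s \<times> 'y) pmf) \<Rightarrow> ('z \<Rightarrow> 'y \<Rightarrow> 'a \<Rightarrow> 'z) \<Rightarrow> 'z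
   \<Rightarrow> (nat \<Rightarrow> 'z \<Rightarrow> 'a pmf) \<Rightarrow> nat \<Rightarrow> ('s \<times> 'y \<times> 'z \<times> 'a) list pmf" where
  "pomdp_traj rho0 P phi z0 mu 0 =
     bind_pmf rho0 (\<lambda>(s, y). bind_pmf (mu 1 z0) (\<lambda>a. return_pmf [(s, y, z0, a)]))"
| "pomdp_traj rho0 P phi z0 mu (Suc n) =
     bind_pmf (pomdp_traj rho0 P phi z0 mu n) (\<lambda>h.
       (case last h of (s, y, z, a) \<Rightarrow>
         bind_pmf (P s a) (\<lambda>(s', y').
           bind_pmf (mu (Suc (Suc n)) (phi z y' a)) (\<lambda>a'.
             return_pmf (h @ [(s', y', phi z y' a, a')])))))"

text \<open>The process X_t = f(trajectory entry t) is a (possibly time-inhomogeneous)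
  Markov chain: for every time n+1 (0-indexed n), every history h of values of
  X_1..X_{n+1} and every value w,
  P(X_{1:n+1} = h, X_{n+2} = w) P(X_{n+1} = last h)
    = P(X_{1:n+1} = h) P(X_{n+1} = last h, X_{n+2} = w),
  i.e. P(X_{n+2} = w | X_{1:n+1} = h) = P(X_{n+2} = w | X_{n+1} = last h)
  whenever the conditioning event has positive probability.\<close>

definition markov_proj :: "(nat \<Rightarrow> 'x list pmf) \<Rightarrow> ('x \<Rightarrow> 'w) \<Rightarrow> bool" where
  "markov_proj p f \<longleftrightarrow>
    (\<forall>n h w. length h = Suc n \<longrightarrow>
      measure_pmf.prob (p (Suc n)) {\<tau>. map f \<tau> = h @ [w]}
        * measure_pmf.prob (p (Suc n)) {\<tau>. f (\<tau> ! n) = last h}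
      = measure_pmf.prob (p (Suc n)) {\<tau>. map f (take (Suc n) \<tau>) = h}
        * measure_pmf.prob (p (Suc n)) {\<tau>. f (\<tau> ! n) = last h \<and> f (\<tau> ! Suc n) = w})"

end

theory Submission
  imports Defs
begin

text \<open>All three projections are Markov by one criterion: the law of the next projected entry,
  given the projected history, depends on that history only through its last entry.  For
  (S, Z, A) and (S, Y, Z, A) this is immediate, because the law of the next full entry
  (S', Y', Z', A') depends only on (S, Z, A) at the current time.  For (S, Z) one first
  observes that the current action A_t does not appear in the (S, Z)-history, and it is drawn
  from mu_t(Z_t) independently of the past; so it can be integrated out into the kernel,
  which then depends on (S_t, Z_t) only.\<close>

lemma measure_pmf_bind_Pair_product:
  fixes q :: "'l pmf" and D :: "'l \<Rightarrow> 'x pmf"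
  assumes "\<And>l. R l \<Longrightarrow> D l = E"
  shows "measure_pmf.prob (bind_pmf q (\<lambda>l. map_pmf (Pair l) (D l))) {(l, x). R l \<and> S x}
       = measure_pmf.prob q {l. R l} * measure_pmf.prob E {x. S x}"
proof -
  have "emeasure (bind_pmf q (\<lambda>l. map_pmf (Pair l) (D l))) {(l, x). R l \<and> S x}
      = (\<integral>\<^sup>+l. emeasure E {x. S x} * indicator {l. R l} l \<partial>q)"
    by (rule trans[OF emeasure_bind_pmf], rule nn_integral_cong)
       (auto simp: assms indicator_def vimage_def)
  also have "\<dots> = emeasure E {x. S x} * emeasure q {l. R l}"
    by (simp add: nn_integral_cmult_indicator)
  finally show ?thesis
    by (simp add: measure_pmf.emeasure_eq_measure flip: ennreal_mult)
qed

lemma markov_proj_if_kernel: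
  fixes p :: "nat \<Rightarrow> 'x list pmf" and f :: "'x \<Rightarrow> 'w" and D :: "nat \<Rightarrow> 'w \<Rightarrow> 'w pmf"
  assumes length: "\<And>n \<tau>. \<tau> \<in> set_pmf (p n) \<Longrightarrow> length \<tau> = Suc n"
    and kernel: "\<And>n. map_pmf (\<lambda>\<tau>. (map f (butlast \<tau>), f (last \<tau>))) (p (Suc n))
        = bind_pmf (map_pmf (map f) (p n)) (\<lambda>l. map_pmf (Pair l) (D n (last l)))"
  shows "markov_proj p f"
  unfolding markov_proj_def
proof (intro allI impI)
  fix n :: nat and h :: "'w list" and w :: 'w
  assume "length h = Suc n"
  define F where "F = (\<lambda>\<tau>. (map f (butlast \<tau>), f (last \<tau>)))"
  let ?p = "p (Suc n)" and ?q = "map_pmf (map f) (p n)" and ?E = "D n (last h)"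
  have split_last: "map f \<tau> = map f (butlast \<tau>) @ [f (last \<tau>)]
      \<and> f (\<tau> ! n) = last (map f (butlast \<tau>)) \<and> \<tau> ! Suc n = last \<tau> \<and> take (Suc n) \<tau> = butlast \<tau>"
    if "\<tau> \<in> set_pmf ?p" for \<tau>
  proof -
    have "length \<tau> = Suc (Suc n)" using length that by blast
    then obtain \<sigma> x y where "\<tau> = \<sigma> @ [x, y]" "length \<sigma> = n"
      by (metis length_Suc_conv_rev append_Cons append_Nil append_assoc)
    then show ?thesis by (simp add: nth_append butlast_conv_take)
  qed
  have product: "measure_pmf.prob ?p {\<tau>. Q \<tau>}
      = measure_pmf.prob ?q {l. R l} * measure_pmf.prob ?E {x. S x}"
    if R: "\<And>l. R l \<Longrightarrow> last l = last h"
      and Q: "\<And>\<tau>. \<tau> \<in> set_pmf ?p \<Longrightarrow> Q \<tau> \<longleftrightarrow> R (map f (butlast \<tau>)) \<and> S (f (last \<tau>))"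
    for Q R S
  proof -
    have "measure_pmf.prob ?p {\<tau>. Q \<tau>} = measure_pmf.prob ?p (F -` {(l, x). R l \<and> S x})"
      using Q by (intro measure_pmf.finite_measure_eq_AE) (auto simp: AE_measure_pmf_iff F_def)
    also have "\<dots> = measure_pmf.prob ?q {l. R l} * measure_pmf.prob ?E {x. S x}"
      unfolding measure_map_pmf[symmetric] F_def kernel
      by (rule measure_pmf_bind_Pair_product) (simp add: R)
    finally show ?thesis .
  qed
  have "measure_pmf.prob ?p {\<tau>. map f \<tau> = h @ [w]}
      = measure_pmf.prob ?q {l. l = h} * measure_pmf.prob ?E {x. x = w}"
    by (rule product) (auto dest!: split_last)
  moreover have "measure_pmf.prob ?p {\<tau>. f (\<tau> ! n) = last h}
      = measure_pmf.prob ?q {l. last l = last h} * measure_pmf.prob ?E {x. True}"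
    by (rule product) (auto dest!: split_last)
  moreover have "measure_pmf.prob ?p {\<tau>. map f (take (Suc n) \<tau>) = h}
      = measure_pmf.prob ?q {l. l = h} * measure_pmf.prob ?E {x. True}"
    by (rule product) (auto dest!: split_last)
  moreover have "measure_pmf.prob ?p {\<tau>. f (\<tau> ! n) = last h \<and> f (\<tau> ! Suc n) = w}
      = measure_pmf.prob ?q {l. last l = last h} * measure_pmf.prob ?E {x. x = w}"
    by (rule product) (auto dest!: split_last)
  ultimately show "measure_pmf.prob ?p {\<tau>. map f \<tau> = h @ [w]} * measure_pmf.prob ?p {\<tau>. f (\<tau> ! n) = last h}
      = measure_pmf.prob ?p {\<tau>. map f (take (Suc n) \<tau>) = h}
        * measure_pmf.prob ?p {\<tau>. f (\<tau> ! n) = last h \<and> f (\<tau> ! Suc n) = w}"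
    by (simp only: ac_simps)
qed

lemma markov_proj_if_lumpable:
  fixes p :: "nat \<Rightarrow> 'x list pmf" and K :: "nat \<Rightarrow> 'x \<Rightarrow> 'x pmf" and f :: "'x \<Rightarrow> 'w"
  assumes length: "\<And>n \<tau>. \<tau> \<in> set_pmf (p n) \<Longrightarrow> length \<tau> = Suc n"
    and step: "\<And>n. p (Suc n) = bind_pmf (p n) (\<lambda>\<tau>. map_pmf (\<lambda>x. \<tau> @ [x]) (K n (last \<tau>)))"
    and lumpable: "\<And>n x x'. f x = f x' \<Longrightarrow> map_pmf f (K n x) = map_pmf f (K n x')"
  shows "markov_proj p f"
proof -
  define D where "D n w = map_pmf f (K n (SOME x. f x = w))" for n w
  have D: "map_pmf f (K n x) = D n (f x)" for n x
    unfolding D_def by (rule lumpable) (metis (mono_tags) someI)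
  have nonempty: "\<tau> \<noteq> []" if "\<tau> \<in> set_pmf (p n)" for n \<tau>
    using length[OF that] by auto
  show ?thesis
  proof (rule markov_proj_if_kernel[OF length])
    show "map_pmf (\<lambda>\<tau>. (map f (butlast \<tau>), f (last \<tau>))) (p (Suc n))
        = bind_pmf (map_pmf (map f) (p n)) (\<lambda>l. map_pmf (Pair l) (D n (last l)))" for n
      unfolding step map_bind_pmf bind_map_pmf map_pmf_comp
      by (intro bind_pmf_cong) (simp_all add: nonempty last_map flip: D map_pmf_comp)
  qed
qed

context
  fixes rho0 :: "('s \<times> 'y) pmf"
    and P :: "'s \<Rightarrow> 'a \<Rightarrow> ('s \<times> 'y) pmf"
    and phi :: "'z \<Rightarrow> 'y \<Rightarrow> 'a \<Rightarrow> 'z"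
    and z0 :: 'z
    and mu :: "nat \<Rightarrow> 'z \<Rightarrow> 'a pmf"
begin

definition pomdp_kernel :: "nat \<Rightarrow> 's \<times> 'y \<times> 'z \<times> 'a \<Rightarrow> ('s \<times> 'y \<times> 'z \<times> 'a) pmf" where
  "pomdp_kernel n = (\<lambda>(s, y, z, a). bind_pmf (P s a) (\<lambda>(s', y').
     map_pmf (\<lambda>a'. (s', y', phi z y' a, a')) (mu (Suc (Suc n)) (phi z y' a))))"

lemma pomdp_traj_Suc:
  "pomdp_traj rho0 P phi z0 mu (Suc n) = bind_pmf (pomdp_traj rho0 P phi z0 mu n)
     (\<lambda>\<tau>. map_pmf (\<lambda>x. \<tau> @ [x]) (pomdp_kernel n (last \<tau>)))"
  by (auto simp: pomdp_kernel_def map_bind_pmf map_pmf_def bind_assoc_pmf bind_return_pmf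
      split: prod.split intro!: bind_pmf_cong)

lemma length_pomdp_traj: "\<tau> \<in> set_pmf (pomdp_traj rho0 P phi z0 mu n) \<Longrightarrow> length \<tau> = Suc n"
  by (induction n arbitrary: \<tau>) (auto simp: pomdp_traj_Suc simp del: pomdp_traj.simps(2))

lemma pomdp_kernel_state_agent:
  "map_pmf (\<lambda>(s, y, z, a). (s, z)) (pomdp_kernel n (s, y, z, a))
     = map_pmf (\<lambda>(s', y'). (s', phi z y' a)) (P s a)"
  by (simp add: pomdp_kernel_def map_bind_pmf map_pmf_comp split_def map_pmf_def[symmetric])

fun pomdp_pre_decision :: "nat \<Rightarrow> (('s \<times> 'y \<times> 'z \<times> 'a) list \<times> 's \<times> 'y \<times> 'z) pmf" where
  "pomdp_pre_decision 0 = map_pmf (\<lambda>(s, y). ([], s, y, z0)) rho0"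
| "pomdp_pre_decision (Suc n) = bind_pmf (pomdp_traj rho0 P phi z0 mu n) (\<lambda>\<tau>.
     case last \<tau> of (s, y, z, a) \<Rightarrow> map_pmf (\<lambda>(s', y'). (\<tau>, s', y', phi z y' a)) (P s a))"

lemma pomdp_traj_eq_pre_decision:
  "pomdp_traj rho0 P phi z0 mu n = bind_pmf (pomdp_pre_decision n)
     (\<lambda>(\<tau>, s, y, z). map_pmf (\<lambda>a. \<tau> @ [(s, y, z, a)]) (mu (Suc n) z))"
  by (cases n) (auto simp: map_pmf_def bind_assoc_pmf bind_return_pmf split: prod.split intro!: bind_pmf_cong)

lemma markov_proj_state_agent: "markov_proj (pomdp_traj rho0 P phi z0 mu) (\<lambda>(s, y, z, a). (s, z))"
proof (rule markov_proj_if_kernel[OF length_pomdp_traj, where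
      D = "\<lambda>n (s, z). bind_pmf (mu (Suc n) z) (\<lambda>a. map_pmf (\<lambda>(s', y'). (s', phi z y' a)) (P s a))"])
  fix n
  let ?f = "\<lambda>(s, y, z, a). (s, z)"
  show "map_pmf (\<lambda>\<tau>. (map ?f (butlast \<tau>), ?f (last \<tau>))) (pomdp_traj rho0 P phi z0 mu (Suc n))
      = bind_pmf (map_pmf (map ?f) (pomdp_traj rho0 P phi z0 mu n)) (\<lambda>l. map_pmf (Pair l)
          ((\<lambda>(s, z). bind_pmf (mu (Suc n) z) (\<lambda>a. map_pmf (\<lambda>(s', y'). (s', phi z y' a)) (P s a)))
            (last l)))"
    unfolding pomdp_traj_Suc map_bind_pmf bind_map_pmf map_pmf_comp
    by (subst (1 2) pomdp_traj_eq_pre_decision, unfold bind_assoc_pmf, rule bind_pmf_cong)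
      (auto simp: bind_map_pmf map_bind_pmf map_pmf_comp pomdp_kernel_state_agent
        simp flip: map_pmf_comp split: prod.split)
qed

lemma markov_proj_state_agent_action:
  "markov_proj (pomdp_traj rho0 P phi z0 mu) (\<lambda>(s, y, z, a). (s, z, a))"
  by (rule markov_proj_if_lumpable[where K = pomdp_kernel, OF length_pomdp_traj pomdp_traj_Suc])
    (auto simp: pomdp_kernel_def)

lemma markov_proj_full:
  "markov_proj (pomdp_traj rho0 P phi z0 mu) (\<lambda>(s, y, z, a). (s, y, z, a))"
proof -
  have "(\<lambda>(s, y, z, a). (s, y, z, a)) = (id :: 's \<times> 'y \<times> 'z \<times> 'a \<Rightarrow> _)"
    by auto
  then show ?thesis
    by (metis markov_proj_if_lumpable[where K = pomdp_kernel, OF length_pomdp_traj pomdp_traj_Suc] id_apply)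
qed

end

theorem lemma1:
  fixes rho0 :: "('s::finite \<times> 'y::finite) pmf"
    and P :: "'s \<Rightarrow> 'a::finite \<Rightarrow> ('s \<times> 'y) pmf"
    and phi :: "'z::finite \<Rightarrow> 'y \<Rightarrow> 'a \<Rightarrow> 'z"
    and z0 :: 'z
    and mu :: "nat \<Rightarrow> 'z \<Rightarrow> 'a pmf"
  shows "markov_proj (pomdp_traj rho0 P phi z0 mu) (\<lambda>(s, y, z, a). (s, z))
       \<and> markov_proj (pomdp_traj rho0 P phi z0 mu) (\<lambda>(s, y, z, a). (s, z, a))
       \<and> markov_proj (pomdp_traj rho0 P phi z0 mu) (\<lambda>(s, y, z, a). (s, y, z, a))"
  by (intro conjI markov_proj_state_agent markov_proj_state_agent_action markov_proj_full)

end
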